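(* There exists an online ranking game for NDCG with top-1 feedback (binary relevance, some fixed number of objects $m$) such that for every online learning algorithm there is an adversary strategy generating $r_1,\dots,r_T\in\{0,1\}^m$ with $$\max_\sigma\sum_{t=1}^T NDCG(\sigma,r_t)-\mathbb{E}\Big[\sum_{t=1}^T NDCG(\sigma_t,r_t)\Big]=\Omega(T).$$ The same lower bound holds with NDCG replaced by MAP or by AUC (for AUC, a loss, the regret is $\mathbb{E}\sum_t AUC(\sigma_t,r_t)-\min_\sigma\sum_t AUC(\sigma,r_t)$).
   Context: Objects are $\{1,\dots,m\}$; a ranking is a permutation $\sigma$ of $[m]$ with $\sigma(i)$ the rank of object $i$ and $\sigma^{-1}(j)$ the object at rank $j$. $NDCG(\sigma,r)=\frac{1}{Z(r)}\sum_{i=1}^m\frac{r(i)}{\log_2(1+\sigma(i))}$ with $Z(r)=\max_\sigma\sum_i\frac{r(i)}{\log_2(1+\sigma(i))}$; $MAP(\sigma,r)=\frac{1}{\|r\|_1}\sum_{i=1}^m\frac{\sum_{j\le i}\mathbb{1}(r(\sigma^{-1}(j))=1)}{i}\mathbb{1}(r(\sigma^{-1}(i))=1)$; $AUC(\sigma,r)=\frac{1}{N(r)}\sum_{i,j}\mathbb{1}(\sigma(i)<\sigma(j))\mathbb{1}(r(i)<r(j))$ with $N(r)=\|r\|_1(m-\|r\|_1)$. Game: an oblivious adversary fixes $r_1,\dots,r_T$ in advance; at round $t$ the learner (possibly randomized) outputs $\sigma_t$ and observes only $r_t(\sigma_t^{-1}(1))$, the relevance of the top-ranked object; the expectation is over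 the learner's randomization. *)

theory Defs
  imports "HOL-Probability.Probability" "HOL-Combinatorics.Permutations"
begin

text \<open>A ranking sigma permutes {1..m}; sigma i is the rank of object i,
  and inv sigma j is the object at rank j. A relevance vector is r :: nat => real
  (only its values on {1..m} matter).\<close>

type_synonym ranking = "nat \<Rightarrow> nat"
type_synonym relevance = "nat \<Rightarrow> real"

definition rankings :: "nat \<Rightarrow> ranking set" where
  "rankings m = {\<sigma>. \<sigma> permutes {1..m}}"

definition dcg :: "nat \<Rightarrow> ranking \<Rightarrow> relevance \<Rightarrow> real" where
  "dcg m \<sigma> r = (\<Sum>i\<in>{1..m}. r i / log 2 (1 + real (\<sigma> i)))"

definition NDCG :: "nat \<Rightarrow> ranking \<Rightarrow> relevance \<Rightarrow> real" where
  "NDCG m \<sigma> r = dcg m \<sigma> r / Max ((\<lambda>\<tau>. dcg m \<tau> r) ` rankings m)"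

definition norm1 :: "nat \<Rightarrow> relevance \<Rightarrow> real" where
  "norm1 m r = (\<Sum>i\<in>{1..m}. \<bar>r i\<bar>)"

definition MAP :: "nat \<Rightarrow> ranking \<Rightarrow> relevance \<Rightarrow> real" where
  "MAP m \<sigma> r = (1 / norm1 m r) *
     (\<Sum>i\<in>{1..m}. (real (card {j\<in>{1..i}. r (inv \<sigma> j) = 1}) / real i)
                    * (if r (inv \<sigma> i) = 1 then 1 else 0))"

definition AUC :: "nat \<Rightarrow> ranking \<Rightarrow> relevance \<Rightarrow> real" where
  "AUC m \<sigma> r = (1 / (norm1 m r * (real m - norm1 m r))) *
     (\<Sum>i\<in>{1..m}. \<Sum>j\<in>{1..m}. (if \<sigma> i < \<sigma> j then 1 else 0) * (if r i < r j then 1 else 0))"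

text \<open>A (possibly randomized) learner: given the history of its own past rankings and the
  observed top-1 feedback, it outputs a probability distribution over rankings.
  This is a behavioural strategy; since the set of rankings is finite, it is fully general.\<close>

type_synonym learner = "(ranking \<times> real) list \<Rightarrow> ranking pmf"

definition valid_learner :: "nat \<Rightarrow> learner \<Rightarrow> bool" where
  "valid_learner m L \<longleftrightarrow> (\<forall>h. set_pmf (L h) \<subseteq> rankings m)"

text \<open>Expected cumulative value of metric f over the remaining k rounds, given the history h;
  the current round index is length h (rounds are 0,1,...), the adversary's relevance
  at round t is rs t, and the feedback is the relevance of the top-ranked object.\<close>

fun exp_cum :: "(ranking \<Rightarrow> relevance \<Rightarrow> real) \<Rightarrow> learner \<Rightarrow> (nat \<Rightarrow> relevance)
                 \<Rightarrow> (ranking \<times> real) list \<Rightarrow> nat \<Rightarrow> real" where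
  "exp_cum f L rs h 0 = 0"
| "exp_cum f L rs h (Suc k) =
     measure_pmf.expectation (L h)
       (\<lambda>\<sigma>. f \<sigma> (rs (length h)) + exp_cum f L rs (h @ [(\<sigma>, rs (length h) (inv \<sigma> 1))]) k)"

definition binary_seq :: "nat \<Rightarrow> nat \<Rightarrow> (nat \<Rightarrow> relevance) \<Rightarrow> bool" where
  "binary_seq m T rs \<longleftrightarrow> (\<forall>t<T. \<forall>i\<in>{1..m}. rs t i \<in> {0, 1})"

definition regret_gain :: "nat \<Rightarrow> (ranking \<Rightarrow> relevance \<Rightarrow> real) \<Rightarrow> learner
                            \<Rightarrow> (nat \<Rightarrow> relevance) \<Rightarrow> nat \<Rightarrow> real" where
  "regret_gain m f L rs T =
     Max ((\<lambda>\<sigma>. \<Sum>t<T. f \<sigma> (rs t)) ` rankings m) - exp_cum f L rs [] T"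

definition regret_loss :: "nat \<Rightarrow> (ranking \<Rightarrow> relevance \<Rightarrow> real) \<Rightarrow> learner
                            \<Rightarrow> (nat \<Rightarrow> relevance) \<Rightarrow> nat \<Rightarrow> real" where
  "regret_loss m f L rs T =
     exp_cum f L rs [] T - Min ((\<lambda>\<sigma>. \<Sum>t<T. f \<sigma> (rs t)) ` rankings m)"

end

theory Submission
  imports Defs
begin

text \<open>Le Cam's two-point method, adapted to top-1 feedback. Take two mixtures of binary
  relevance vectors under which every object is relevant with the same probability. When the
  adversary draws the rounds independently from either mixture, the feedback (the relevance of
  the top-ranked object) has the same law in both games, whatever the learner does. Hence the
  learner's expected gains in the two games add up to at most \<open>T M\<close>, where \<open>M\<close> bounds the sum
  of the two expected gains of every single ranking. If the best fixed rankings of the two games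
  beat \<open>M\<close> by \<open>2c\<close>, the expected regret is at least \<open>c T\<close> in one of the games, and hence for some
  deterministic relevance sequence. Suitable mixtures exist for NDCG and MAP with three objects
  and for AUC with four; AUC, a loss, is handled by negation.\<close>

fun avg_seq :: "(nat \<Rightarrow> real) \<Rightarrow> nat set \<Rightarrow> nat \<Rightarrow> (nat list \<Rightarrow> real) \<Rightarrow> real" where
  "avg_seq w I 0 F = F []"
| "avg_seq w I (Suc k) F = (\<Sum>i\<in>I. w i * avg_seq w I k (\<lambda>ys. F (i # ys)))"

lemma avg_seq_linear:
  "avg_seq w I k (\<lambda>xs. a * F xs + b * G xs) = a * avg_seq w I k F + b * avg_seq w I k G"
  by (induction k arbitrary: F G) (simp_all add: sum.distrib sum_distrib_left algebra_simps)

lemma avg_seq_add_const: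
  assumes "sum w I = 1"
  shows "avg_seq w I k (\<lambda>xs. c + F xs) = c + avg_seq w I k F"
proof (induction k arbitrary: F)
  case (Suc k)
  then show ?case
    using assms by (simp add: distrib_left sum.distrib flip: sum_distrib_right)
qed simp

lemma avg_seq_sum:
  assumes "finite A"
  shows "avg_seq w I k (\<lambda>xs. \<Sum>a\<in>A. G a xs) = (\<Sum>a\<in>A. avg_seq w I k (G a))"
proof (induction k arbitrary: G)
  case (Suc k)
  then show ?case
    by (simp add: sum_distrib_left) (rule sum.swap)
qed simp

lemma avg_seq_mono:
  assumes "\<And>i. i \<in> I \<Longrightarrow> w i \<ge> 0" and "\<And>xs. F xs \<le> G xs"
  shows "avg_seq w I k F \<le> avg_seq w I k G"
  using assms(2)
  by (induction k arbitrary: F G) (simp_all add: sum_mono mult_left_mono assms(1))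

lemma exists_seq_ge_avg_seq:
  assumes "finite I" and "\<And>i. i \<in> I \<Longrightarrow> w i \<ge> 0" and "sum w I = 1"
  shows "\<exists>xs. set xs \<subseteq> I \<and> length xs = k \<and> avg_seq w I k F \<le> F xs"
proof (induction k arbitrary: F)
  case (Suc k)
  have "\<forall>i. \<exists>ys. set ys \<subseteq> I \<and> length ys = k \<and> avg_seq w I k (\<lambda>zs. F (i # zs)) \<le> F (i # ys)"
    using Suc.IH by blast
  then obtain ys where ys: "\<And>i. set (ys i) \<subseteq> I \<and> length (ys i) = k \<and>
      avg_seq w I k (\<lambda>zs. F (i # zs)) \<le> F (i # ys i)"
    by metis
  define g where "g i = F (i # ys i)" for i
  have "I \<noteq> {}"
    using assms(3) by auto
  then have "Max (g ` I) \<in> g ` I"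
    using assms(1) by simp
  then obtain i0 where "i0 \<in> I" and "g i0 = Max (g ` I)"
    by auto
  then have i0: "i0 \<in> I" "\<And>i. i \<in> I \<Longrightarrow> g i \<le> g i0"
    using assms(1) by simp_all
  have "avg_seq w I (Suc k) F \<le> (\<Sum>i\<in>I. w i * g i0)"
    unfolding avg_seq.simps
  proof (rule sum_mono)
    fix i assume "i \<in> I"
    then have "avg_seq w I k (\<lambda>zs. F (i # zs)) \<le> g i0"
      using ys[of i] i0(2)[of i] unfolding g_def by linarith
    then show "w i * avg_seq w I k (\<lambda>zs. F (i # zs)) \<le> w i * g i0"
      using assms(2) \<open>i \<in> I\<close> by (simp add: mult_left_mono)
  qed
  also have "\<dots> = g i0"
    using assms(3) by (simp flip: sum_distrib_right)
  finally show ?case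
    using ys[of i0] i0(1) g_def by (intro exI[of _ "i0 # ys i0"]) auto
qed simp

text \<open>A randomised adversary is a list of indices drawn as in \<open>avg_seq\<close>; from round \<open>n\<close> on
  it plays the relevance vectors \<open>v (xs ! 0), v (xs ! 1), \<dots>\<close>.\<close>

definition adv_seq :: "(nat \<Rightarrow> relevance) \<Rightarrow> nat \<Rightarrow> nat list \<Rightarrow> nat \<Rightarrow> relevance" where
  "adv_seq v n xs t = (if n \<le> t \<and> t - n < length xs then v (xs ! (t - n)) else (\<lambda>_. 0))"

lemma adv_seq_Cons_first: "adv_seq v n (i # xs) n = v i"
  by (simp add: adv_seq_def)

lemma adv_seq_Cons_later:
  assumes "t > n"
  shows "adv_seq v n (i # xs) t = adv_seq v (Suc n) xs t"
proof -
  have "t - n = Suc (t - Suc n)"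
    using assms by simp
  then show ?thesis
    by (simp add: adv_seq_def)
qed

lemma exp_cum_cong:
  assumes "\<And>t. t \<ge> length h \<Longrightarrow> rs t = rs' t"
  shows "exp_cum f L rs h k = exp_cum f L rs' h k"
  using assms
proof (induction k arbitrary: h)
  case (Suc k)
  have "exp_cum f L rs (h @ [(\<sigma>, b)]) k = exp_cum f L rs' (h @ [(\<sigma>, b)]) k" for \<sigma> b
    using Suc.prems by (intro Suc.IH) auto
  then show ?case
    using Suc.prems by simp
qed simp

lemma finite_rankings: "finite (rankings m)"
  unfolding rankings_def by (rule finite_permutations) simp

lemma id_in_rankings: "id \<in> rankings m"
  by (simp add: rankings_def)

lemma learner_expectation_eq_sum:
  assumes "valid_learner m L"
  shows "measure_pmf.expectation (L h) g = (\<Sum>\<sigma>\<in>rankings m. pmf (L h) \<sigma> * g \<sigma>)"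
  using assms unfolding valid_learner_def
  by (subst integral_measure_pmf_real[OF finite_rankings]) (auto simp: mult.commute)

lemma learner_sum_pmf_eq_1:
  assumes "valid_learner m L"
  shows "(\<Sum>\<sigma>\<in>rankings m. pmf (L h) \<sigma>) = 1"
  using assms unfolding valid_learner_def by (intro sum_pmf_eq_1 finite_rankings) auto

lemma top_object_in_range:
  assumes "\<sigma> \<in> rankings m" and "m \<ge> 1"
  shows "inv \<sigma> 1 \<in> {1..m}"
proof -
  have "inv \<sigma> permutes {1..m}"
    using assms(1) permutes_inv by (auto simp: rankings_def)
  then show ?thesis
    using assms(2) permutes_in_image by fastforce
qed

definition mix_gain :: "(nat \<Rightarrow> real) \<Rightarrow> nat set \<Rightarrow> (nat \<Rightarrow> relevance)
                         \<Rightarrow> (ranking \<Rightarrow> relevance \<Rightarrow> real) \<Rightarrow> ranking \<Rightarrow> real" where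
  "mix_gain w I v f \<sigma> = (\<Sum>i\<in>I. w i * f \<sigma> (v i))"

definition mix_relevant_prob :: "(nat \<Rightarrow> real) \<Rightarrow> nat set \<Rightarrow> (nat \<Rightarrow> relevance) \<Rightarrow> nat \<Rightarrow> real" where
  "mix_relevant_prob w I v x = (\<Sum>i\<in>I. w i * (if v i x = 1 then 1 else 0))"

lemma mix_relevant_prob_bounds:
  assumes "\<And>i. i \<in> I \<Longrightarrow> w i \<ge> 0" and "sum w I = 1"
  shows "0 \<le> mix_relevant_prob w I v x" and "mix_relevant_prob w I v x \<le> 1"
proof -
  show "0 \<le> mix_relevant_prob w I v x"
    unfolding mix_relevant_prob_def using assms(1) by (intro sum_nonneg) auto
  have "mix_relevant_prob w I v x \<le> sum w I"
    unfolding mix_relevant_prob_def using assms(1) by (intro sum_mono) auto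
  then show "mix_relevant_prob w I v x \<le> 1"
    using assms(2) by simp
qed

lemma sum_mix_binary:
  assumes "sum w I = 1" and "\<And>i. i \<in> I \<Longrightarrow> v i x \<in> {0, 1}"
  shows "(\<Sum>i\<in>I. w i * B (v i x))
           = mix_relevant_prob w I v x * B 1 + (1 - mix_relevant_prob w I v x) * B 0"
proof -
  have "(\<Sum>i\<in>I. w i * B (v i x))
      = (\<Sum>i\<in>I. w i * (if v i x = 1 then 1 else 0) * B 1 + (w i - w i * (if v i x = 1 then 1 else 0)) * B 0)"
  proof (rule sum.cong)
    fix i assume "i \<in> I"
    then consider "v i x = 0" | "v i x = 1"
      using assms(2) by blast
    then show "w i * B (v i x) = w i * (if v i x = 1 then 1 else 0) * B 1
        + (w i - w i * (if v i x = 1 then 1 else 0)) * B 0"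
      by cases auto
  qed simp
  also have "\<dots> = mix_relevant_prob w I v x * B 1 + (sum w I - mix_relevant_prob w I v x) * B 0"
    by (simp add: mix_relevant_prob_def sum.distrib sum_subtractf flip: sum_distrib_right)
  finally show ?thesis
    using assms(1) by simp
qed

lemma avg_seq_exp_cum_Suc:
  assumes "valid_learner m L" and "sum w I = 1" and "length h = n"
  shows "avg_seq w I (Suc k) (\<lambda>xs. exp_cum f L (adv_seq v n xs) h (Suc k))
    = (\<Sum>\<sigma>\<in>rankings m. pmf (L h) \<sigma> * (mix_gain w I v f \<sigma> +
         (\<Sum>i\<in>I. w i * avg_seq w I k
            (\<lambda>ys. exp_cum f L (adv_seq v (Suc n) ys) (h @ [(\<sigma>, v i (inv \<sigma> 1))]) k))))"
proof -
  define B where "B \<sigma> b = avg_seq w I k (\<lambda>ys. exp_cum f L (adv_seq v (Suc n) ys) (h @ [(\<sigma>, b)]) k)"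
    for \<sigma> b
  have shift: "exp_cum f L (adv_seq v n (i # ys)) (h @ [(\<sigma>, b)]) k
             = exp_cum f L (adv_seq v (Suc n) ys) (h @ [(\<sigma>, b)]) k" for i ys \<sigma> b
    using assms(3) by (intro exp_cum_cong) (simp add: adv_seq_Cons_later)
  have first: "avg_seq w I k (\<lambda>ys. exp_cum f L (adv_seq v n (i # ys)) h (Suc k))
      = (\<Sum>\<sigma>\<in>rankings m. pmf (L h) \<sigma> * (f \<sigma> (v i) + B \<sigma> (v i (inv \<sigma> 1))))" for i
  proof -
    have "avg_seq w I k (\<lambda>ys. exp_cum f L (adv_seq v n (i # ys)) h (Suc k))
        = avg_seq w I k (\<lambda>ys. \<Sum>\<sigma>\<in>rankings m. pmf (L h) \<sigma> * (f \<sigma> (v i) +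
            exp_cum f L (adv_seq v (Suc n) ys) (h @ [(\<sigma>, v i (inv \<sigma> 1))]) k))"
      using assms(3) by (simp add: learner_expectation_eq_sum[OF assms(1)] adv_seq_Cons_first shift)
    also have "\<dots> = (\<Sum>\<sigma>\<in>rankings m. pmf (L h) \<sigma> * (f \<sigma> (v i) + B \<sigma> (v i (inv \<sigma> 1))))"
      using avg_seq_linear[where b = 0] avg_seq_add_const[OF assms(2)]
      by (simp add: avg_seq_sum finite_rankings B_def)
    finally show ?thesis .
  qed
  have "avg_seq w I (Suc k) (\<lambda>xs. exp_cum f L (adv_seq v n xs) h (Suc k))
      = (\<Sum>i\<in>I. \<Sum>\<sigma>\<in>rankings m. w i * (pmf (L h) \<sigma> * (f \<sigma> (v i) + B \<sigma> (v i (inv \<sigma> 1)))))"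
    by (simp only: avg_seq.simps first sum_distrib_left)
  also have "\<dots> = (\<Sum>\<sigma>\<in>rankings m. pmf (L h) \<sigma> *
                     (mix_gain w I v f \<sigma> + (\<Sum>i\<in>I. w i * B \<sigma> (v i (inv \<sigma> 1)))))"
    by (subst sum.swap) (simp add: mix_gain_def sum_distrib_left sum.distrib algebra_simps)
  finally show ?thesis
    by (simp add: B_def)
qed

lemma avg_seq_exp_cum_two_mixtures_le:
  assumes learner: "valid_learner m L" and "m \<ge> 1"
    and w1: "\<And>i. i \<in> I \<Longrightarrow> w1 i \<ge> 0" "sum w1 I = 1"
    and w2: "\<And>i. i \<in> I \<Longrightarrow> w2 i \<ge> 0" "sum w2 I = 1"
    and binary: "\<And>i x. i \<in> I \<Longrightarrow> x \<in> {1..m} \<Longrightarrow> v i x \<in> {0, 1}"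
    and same_prob: "\<And>x. x \<in> {1..m} \<Longrightarrow> mix_relevant_prob w1 I v x = mix_relevant_prob w2 I v x"
    and bound: "\<And>\<sigma>. \<sigma> \<in> rankings m \<Longrightarrow> mix_gain w1 I v f \<sigma> + mix_gain w2 I v f \<sigma> \<le> M"
    and "length h = n"
  shows "avg_seq w1 I k (\<lambda>xs. exp_cum f L (adv_seq v n xs) h k)
       + avg_seq w2 I k (\<lambda>xs. exp_cum f L (adv_seq v n xs) h k) \<le> real k * M"
  using \<open>length h = n\<close>
proof (induction k arbitrary: h n)
  case (Suc k)
  define B where "B w \<sigma> b = avg_seq w I k (\<lambda>ys. exp_cum f L (adv_seq v (Suc n) ys) (h @ [(\<sigma>, b)]) k)"
    for w \<sigma> b
  have IH: "B w1 \<sigma> b + B w2 \<sigma> b \<le> real k * M" for \<sigma> b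
    unfolding B_def using Suc.prems by (intro Suc.IH) simp
  have continuation: "(\<Sum>i\<in>I. w1 i * B w1 \<sigma> (v i (inv \<sigma> 1))) + (\<Sum>i\<in>I. w2 i * B w2 \<sigma> (v i (inv \<sigma> 1)))
      \<le> real k * M" if "\<sigma> \<in> rankings m" for \<sigma>
  proof -
    define x where "x = inv \<sigma> 1"
    define p where "p = mix_relevant_prob w1 I v x"
    have x: "x \<in> {1..m}"
      unfolding x_def using that \<open>m \<ge> 1\<close> by (rule top_object_in_range)
    \<comment> \<open>the feedback bit has the same law under both mixtures, so the two continuations split
      with the same weights and can be bounded together\<close>
    have "(\<Sum>i\<in>I. w1 i * B w1 \<sigma> (v i x)) + (\<Sum>i\<in>I. w2 i * B w2 \<sigma> (v i x))
        = p * (B w1 \<sigma> 1 + B w2 \<sigma> 1) + (1 - p) * (B w1 \<sigma> 0 + B w2 \<sigma> 0)"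
      using sum_mix_binary[OF w1(2), of v x] sum_mix_binary[OF w2(2), of v x] binary x same_prob[OF x]
      by (simp add: p_def algebra_simps)
    also have "\<dots> \<le> p * (real k * M) + (1 - p) * (real k * M)"
      using mix_relevant_prob_bounds[OF w1] IH unfolding p_def by (intro add_mono mult_left_mono) auto
    finally show ?thesis
      by (simp add: x_def algebra_simps)
  qed
  have "avg_seq w1 I (Suc k) (\<lambda>xs. exp_cum f L (adv_seq v n xs) h (Suc k))
      + avg_seq w2 I (Suc k) (\<lambda>xs. exp_cum f L (adv_seq v n xs) h (Suc k))
    = (\<Sum>\<sigma>\<in>rankings m. pmf (L h) \<sigma> * ((mix_gain w1 I v f \<sigma> + mix_gain w2 I v f \<sigma>) +
         ((\<Sum>i\<in>I. w1 i * B w1 \<sigma> (v i (inv \<sigma> 1))) + (\<Sum>i\<in>I. w2 i * B w2 \<sigma> (v i (inv \<sigma> 1))))))"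
    unfolding avg_seq_exp_cum_Suc[OF learner w1(2) Suc.prems]
      avg_seq_exp_cum_Suc[OF learner w2(2) Suc.prems] B_def
    by (simp add: sum.distrib distrib_left)
  also have "\<dots> \<le> (\<Sum>\<sigma>\<in>rankings m. pmf (L h) \<sigma> * (M + real k * M))"
    by (intro sum_mono mult_left_mono add_mono bound continuation) auto
  also have "\<dots> = (\<Sum>\<sigma>\<in>rankings m. pmf (L h) \<sigma>) * (M + real k * M)"
    by (simp add: sum_distrib_right)
  also have "\<dots> = real (Suc k) * M"
    by (simp add: learner_sum_pmf_eq_1[OF learner] algebra_simps)
  finally show ?case .
qed simp

lemma avg_seq_fixed_ranking_gain:
  assumes "sum w I = 1"
  shows "avg_seq w I k (\<lambda>xs. \<Sum>t\<in>{n..<n+k}. f \<sigma> (adv_seq v n xs t)) = real k * mix_gain w I v f \<sigma>"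
proof (induction k arbitrary: n)
  case (Suc k)
  have split: "(\<Sum>t\<in>{n..<n + Suc k}. f \<sigma> (adv_seq v n (i # ys) t))
      = f \<sigma> (v i) + (\<Sum>t\<in>{Suc n..<Suc n + k}. f \<sigma> (adv_seq v (Suc n) ys t))" for i ys
    by (simp add: sum.atLeast_Suc_lessThan adv_seq_Cons_first adv_seq_Cons_later)
  have "avg_seq w I (Suc k) (\<lambda>xs. \<Sum>t\<in>{n..<n + Suc k}. f \<sigma> (adv_seq v n xs t))
      = (\<Sum>i\<in>I. w i * (f \<sigma> (v i) + real k * mix_gain w I v f \<sigma>))"
    by (simp only: avg_seq.simps split avg_seq_add_const[OF assms] Suc.IH)
  also have "\<dots> = mix_gain w I v f \<sigma> + sum w I * (real k * mix_gain w I v f \<sigma>)"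
    by (simp add: mix_gain_def distrib_left sum.distrib sum_distrib_right)
  finally show ?case
    using assms by (simp add: algebra_simps)
qed simp

lemma regret_gain_two_mixtures_lower_bound:
  assumes learner: "valid_learner m L" and "m \<ge> 1" and "finite I"
    and w1: "\<And>i. i \<in> I \<Longrightarrow> w1 i \<ge> 0" "sum w1 I = 1"
    and w2: "\<And>i. i \<in> I \<Longrightarrow> w2 i \<ge> 0" "sum w2 I = 1"
    and binary: "\<And>i x. i \<in> I \<Longrightarrow> x \<in> {1..m} \<Longrightarrow> v i x \<in> {0, 1}"
    and same_prob: "\<And>x. x \<in> {1..m} \<Longrightarrow> mix_relevant_prob w1 I v x = mix_relevant_prob w2 I v x"
    and bound: "\<And>\<sigma>. \<sigma> \<in> rankings m \<Longrightarrow> mix_gain w1 I v f \<sigma> + mix_gain w2 I v f \<sigma> \<le> M"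
    and \<rho>: "\<rho>1 \<in> rankings m" "\<rho>2 \<in> rankings m"
    and gap: "mix_gain w1 I v f \<rho>1 + mix_gain w2 I v f \<rho>2 - M \<ge> 2 * c"
  shows "\<exists>rs. binary_seq m T rs \<and> regret_gain m f L rs T \<ge> c * real T"
proof -
  define R where "R xs = regret_gain m f L (adv_seq v 0 xs) T" for xs
  define E where "E xs = exp_cum f L (adv_seq v 0 xs) [] T" for xs
  have avg_R_ge: "avg_seq w I T R \<ge> real T * mix_gain w I v f \<rho> - avg_seq w I T E"
    if "\<And>i. i \<in> I \<Longrightarrow> w i \<ge> 0" "sum w I = 1" "\<rho> \<in> rankings m" for w \<rho>
  proof -
    have "1 * (\<Sum>t\<in>{0..<0+T}. f \<rho> (adv_seq v 0 xs t)) + (-1) * E xs \<le> R xs" for xs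
      unfolding R_def regret_gain_def E_def
      using that(3) by (simp add: finite_rankings atLeast0LessThan)
    then have "avg_seq w I T (\<lambda>xs. 1 * (\<Sum>t\<in>{0..<0+T}. f \<rho> (adv_seq v 0 xs t)) + (-1) * E xs)
        \<le> avg_seq w I T R"
      by (intro avg_seq_mono that(1))
    then show ?thesis
      unfolding avg_seq_linear avg_seq_fixed_ranking_gain[OF that(2)] by simp
  qed
  have "avg_seq w1 I T E + avg_seq w2 I T E \<le> real T * M"
    unfolding E_def
    by (rule avg_seq_exp_cum_two_mixtures_le[OF learner \<open>m \<ge> 1\<close> w1 w2 binary same_prob bound list.size(3)])
  then have "avg_seq w1 I T R + avg_seq w2 I T R
      \<ge> real T * (mix_gain w1 I v f \<rho>1 + mix_gain w2 I v f \<rho>2 - M)"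
    using avg_R_ge[OF w1 \<rho>(1)] avg_R_ge[OF w2 \<rho>(2)] by (simp add: algebra_simps)
  moreover have "real T * (mix_gain w1 I v f \<rho>1 + mix_gain w2 I v f \<rho>2 - M) \<ge> real T * (2 * c)"
    using gap by (intro mult_left_mono) auto
  ultimately have "avg_seq w1 I T R \<ge> c * real T \<or> avg_seq w2 I T R \<ge> c * real T"
    by argo
  then obtain w where w: "\<And>i. i \<in> I \<Longrightarrow> w i \<ge> 0" "sum w I = 1"
    and avg_R: "avg_seq w I T R \<ge> c * real T"
    using w1 w2 by blast
  obtain xs where xs: "set xs \<subseteq> I" "length xs = T" "avg_seq w I T R \<le> R xs"
    using exists_seq_ge_avg_seq[OF \<open>finite I\<close> w] by blast
  have "binary_seq m T (adv_seq v 0 xs)"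
    unfolding binary_seq_def adv_seq_def using xs(1,2) binary nth_mem by fastforce
  then show ?thesis
    using avg_R xs(3) unfolding R_def by force
qed

text \<open>Each round the adversary draws uniformly from the pair a1, a2 or from the pair b1, b2.
  Equal relevance counts per object make the top-1 feedback identically distributed
  under both choices.\<close>

lemma regret_gain_two_pairs_lower_bound:
  fixes a1 a2 b1 b2 :: relevance
  assumes learner: "valid_learner m L" and "m \<ge> 1"
    and binary: "\<And>x. x \<in> {1..m} \<Longrightarrow> {a1 x, a2 x, b1 x, b2 x} \<subseteq> {0, 1}"
    and same_counts: "\<And>x. x \<in> {1..m} \<Longrightarrow> a1 x + a2 x = b1 x + b2 x"
    and bound: "\<And>\<sigma>. \<sigma> \<in> rankings m \<Longrightarrow> f \<sigma> a1 + f \<sigma> a2 + f \<sigma> b1 + f \<sigma> b2 \<le> M"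
    and \<rho>: "\<rho>1 \<in> rankings m" "\<rho>2 \<in> rankings m"
    and gap: "f \<rho>1 a1 + f \<rho>1 a2 + f \<rho>2 b1 + f \<rho>2 b2 - M \<ge> g"
  shows "\<exists>rs. binary_seq m T rs \<and> regret_gain m f L rs T \<ge> g / 4 * real T"
proof -
  define I :: "nat set" where "I = {0, 1, 2, 3}"
  define v where "v i = (if i = 0 then a1 else if i = 1 then a2 else if i = 2 then b1 else b2)" for i :: nat
  define w1 :: "nat \<Rightarrow> real" where "w1 i = (if i < 2 then 1/2 else 0)" for i
  define w2 :: "nat \<Rightarrow> real" where "w2 i = (if i < 2 then 0 else 1/2)" for i
  have indicator_eq: "(if r x = 1 then 1 else 0) = r x" if "r x \<in> {0, 1}" for r :: relevance and x
    using that by auto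
  have gain: "mix_gain w1 I v f \<sigma> = (f \<sigma> a1 + f \<sigma> a2) / 2" "mix_gain w2 I v f \<sigma> = (f \<sigma> b1 + f \<sigma> b2) / 2"
    for \<sigma>
    by (simp_all add: mix_gain_def I_def v_def w1_def w2_def)
  show ?thesis
  proof (rule regret_gain_two_mixtures_lower_bound[OF learner \<open>m \<ge> 1\<close>, of I w1 w2 v f "M / 2" \<rho>1 \<rho>2])
    show "mix_relevant_prob w1 I v x = mix_relevant_prob w2 I v x" if "x \<in> {1..m}" for x
      using binary[OF that] same_counts[OF that]
      by (simp add: mix_relevant_prob_def I_def v_def w1_def w2_def indicator_eq)
    show "mix_gain w1 I v f \<sigma> + mix_gain w2 I v f \<sigma> \<le> M / 2" if "\<sigma> \<in> rankings m" for \<sigma>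
      using bound[OF that] unfolding gain by (simp add: field_simps)
    show "mix_gain w1 I v f \<rho>1 + mix_gain w2 I v f \<rho>2 - M / 2 \<ge> 2 * (g / 4)"
      using gap unfolding gain by (simp add: field_simps)
  qed (use binary \<rho> in \<open>auto simp: I_def v_def w1_def w2_def\<close>)
qed

lemma exp_cum_uminus: "exp_cum (\<lambda>\<sigma> r. - f \<sigma> r) L rs h k = - exp_cum f L rs h k"
proof (induction k arbitrary: h)
  case (Suc k)
  have "(\<lambda>\<sigma>. - f \<sigma> (rs (length h))
          + exp_cum (\<lambda>\<sigma> r. - f \<sigma> r) L rs (h @ [(\<sigma>, rs (length h) (inv \<sigma> 1))]) k)
      = (\<lambda>\<sigma>. - (f \<sigma> (rs (length h)) + exp_cum f L rs (h @ [(\<sigma>, rs (length h) (inv \<sigma> 1))]) k))"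
    using Suc.IH by simp
  then show ?case
    by (simp only: exp_cum.simps integral_minus)
qed simp

lemma regret_loss_eq_regret_gain_uminus:
  "regret_loss m f L rs T = regret_gain m (\<lambda>\<sigma> r. - f \<sigma> r) L rs T"
proof -
  have "rankings m \<noteq> {}"
    using id_in_rankings by blast
  then have "Max ((\<lambda>\<sigma>. \<Sum>t<T. - f \<sigma> (rs t)) ` rankings m) = - Min ((\<lambda>\<sigma>. \<Sum>t<T. f \<sigma> (rs t)) ` rankings m)"
    using finite_rankings
    by (simp add: sum_negf image_image flip: minus_Min_eq_Max[of "(\<lambda>\<sigma>. \<Sum>t<T. f \<sigma> (rs t)) ` rankings m"])
  then show ?thesis
    unfolding regret_loss_def regret_gain_def exp_cum_uminus by simp
qed

lemma atLeastAtMost_1_3: "{1..3::nat} = {1, 2, 3}"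
  by auto

lemma rankings_3_cases:
  assumes "\<sigma> \<in> rankings 3"
  obtains "\<sigma> 1 = 1" "\<sigma> 2 = 2" "\<sigma> 3 = 3" | "\<sigma> 1 = 1" "\<sigma> 2 = 3" "\<sigma> 3 = 2"
    | "\<sigma> 1 = 2" "\<sigma> 2 = 1" "\<sigma> 3 = 3" | "\<sigma> 1 = 2" "\<sigma> 2 = 3" "\<sigma> 3 = 1"
    | "\<sigma> 1 = 3" "\<sigma> 2 = 1" "\<sigma> 3 = 2" | "\<sigma> 1 = 3" "\<sigma> 2 = 2" "\<sigma> 3 = 1"
proof -
  have perm: "\<sigma> permutes {1..3}"
    using assms by (simp add: rankings_def)
  have "\<sigma> i \<in> {1, 2, 3}" if "i \<in> {1, 2, 3}" for i
    using permutes_in_image[OF perm, of i] that unfolding atLeastAtMost_1_3 by blast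
  then have "\<sigma> 1 \<in> {1, 2, 3}" "\<sigma> 2 \<in> {1, 2, 3}" "\<sigma> 3 \<in> {1, 2, 3}"
    by simp_all
  moreover have "\<sigma> 1 \<noteq> \<sigma> 2" "\<sigma> 1 \<noteq> \<sigma> 3" "\<sigma> 2 \<noteq> \<sigma> 3"
    by (simp_all add: inj_eq[OF permutes_inj[OF perm]])
  ultimately show thesis
    using that unfolding insert_iff empty_iff simp_thms by (elim disjE) simp_all
qed

lemma inv_ranking_eqI: "\<sigma> \<in> rankings m \<Longrightarrow> \<sigma> i = j \<Longrightarrow> inv \<sigma> j = i"
  using permutes_inverses(2)[of \<sigma>] by (auto simp: rankings_def)

lemma transpose_in_rankings:
  "a \<in> {1..m} \<Longrightarrow> b \<in> {1..m} \<Longrightarrow> Transposition.transpose a b \<in> rankings m"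
  by (simp add: rankings_def permutes_swap_id)

definition rel3 :: "real \<Rightarrow> real \<Rightarrow> real \<Rightarrow> relevance" where
  "rel3 a b c = (\<lambda>x. if x = 1 then a else if x = 2 then b else if x = 3 then c else 0)"

lemma rel3_simps [simp]: "rel3 a b c 1 = a" "rel3 a b c (Suc 0) = a" "rel3 a b c 2 = b" "rel3 a b c 3 = c"
  by (simp_all add: rel3_def)

definition discount :: "nat \<Rightarrow> real" where
  "discount k = 1 / log 2 (1 + real k)"

lemma log2_4: "log 2 4 = 2"
  using log_nat_power[of "2::real" 2 2] by simp

lemma log2_3_bounds: "1 < log 2 3" "log 2 3 < 2"
proof -
  have "log 2 2 < log 2 3" and "log 2 3 < log 2 4"
    by (subst log_less_cancel_iff; simp)+
  then show "1 < log 2 3" "log 2 3 < 2"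
    by (simp_all add: log2_4)
qed

lemma discount_simps: "discount 1 = 1" "discount (Suc 0) = 1" "discount 3 = 1 / 2"
  by (simp_all add: discount_def log2_4)

lemma discount_2_bounds: "1 / 2 < discount 2" "discount 2 < 1"
  using log2_3_bounds by (simp_all add: discount_def field_simps)

lemma dcg_rel3:
  "dcg 3 \<sigma> (rel3 a b c) = a * discount (\<sigma> 1) + b * discount (\<sigma> 2) + c * discount (\<sigma> 3)"
  unfolding dcg_def atLeastAtMost_1_3 discount_def by simp

lemma Max_dcg_eqI:
  assumes "\<And>\<tau>. \<tau> \<in> rankings m \<Longrightarrow> dcg m \<tau> r \<le> z" and "\<rho> \<in> rankings m" and "dcg m \<rho> r = z"
  shows "Max ((\<lambda>\<tau>. dcg m \<tau> r) ` rankings m) = z"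
  using assms by (intro Max_eqI) (auto simp: finite_rankings)

lemma NDCG_rel3:
  assumes "\<sigma> \<in> rankings 3"
  shows "NDCG 3 \<sigma> (rel3 1 1 0) = (discount (\<sigma> 1) + discount (\<sigma> 2)) / (1 + discount 2)"
    and "NDCG 3 \<sigma> (rel3 0 0 1) = discount (\<sigma> 3)"
    and "NDCG 3 \<sigma> (rel3 1 0 1) = (discount (\<sigma> 1) + discount (\<sigma> 3)) / (1 + discount 2)"
    and "NDCG 3 \<sigma> (rel3 0 1 0) = discount (\<sigma> 2)"
proof -
  have "Max ((\<lambda>\<tau>. dcg 3 \<tau> (rel3 1 1 0)) ` rankings 3) = 1 + discount 2"
    by (rule Max_dcg_eqI[where \<rho> = id])
      (use discount_2_bounds in \<open>auto simp: id_in_rankings dcg_rel3 discount_simps elim!: rankings_3_cases\<close>)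
  moreover have "Max ((\<lambda>\<tau>. dcg 3 \<tau> (rel3 0 0 1)) ` rankings 3) = 1"
    by (rule Max_dcg_eqI[where \<rho> = "Transposition.transpose 1 3"])
      (use discount_2_bounds in \<open>auto simp: transpose_in_rankings dcg_rel3 discount_simps elim!: rankings_3_cases\<close>)
  moreover have "Max ((\<lambda>\<tau>. dcg 3 \<tau> (rel3 1 0 1)) ` rankings 3) = 1 + discount 2"
    by (rule Max_dcg_eqI[where \<rho> = "Transposition.transpose 2 3"])
      (use discount_2_bounds in \<open>auto simp: transpose_in_rankings dcg_rel3 discount_simps elim!: rankings_3_cases\<close>)
  moreover have "Max ((\<lambda>\<tau>. dcg 3 \<tau> (rel3 0 1 0)) ` rankings 3) = 1"
    by (rule Max_dcg_eqI[where \<rho> = "Transposition.transpose 1 2"])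
      (use discount_2_bounds in \<open>auto simp: transpose_in_rankings dcg_rel3 discount_simps elim!: rankings_3_cases\<close>)
  ultimately show "NDCG 3 \<sigma> (rel3 1 1 0) = (discount (\<sigma> 1) + discount (\<sigma> 2)) / (1 + discount 2)"
    and "NDCG 3 \<sigma> (rel3 0 0 1) = discount (\<sigma> 3)"
    and "NDCG 3 \<sigma> (rel3 1 0 1) = (discount (\<sigma> 1) + discount (\<sigma> 3)) / (1 + discount 2)"
    and "NDCG 3 \<sigma> (rel3 0 1 0) = discount (\<sigma> 2)"
    by (simp_all add: NDCG_def dcg_rel3)
qed

lemma NDCG_rel3_sum_le:
  assumes "\<sigma> \<in> rankings 3"
  shows "NDCG 3 \<sigma> (rel3 1 1 0) + NDCG 3 \<sigma> (rel3 0 0 1) + NDCG 3 \<sigma> (rel3 1 0 1) + NDCG 3 \<sigma> (rel3 0 1 0)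
    \<le> (2 + discount 2) / (1 + discount 2) + 1 + discount 2"
proof -
  define d where "d = discount 2"
  define x y z where "x = discount (\<sigma> 1)" and "y = discount (\<sigma> 2)" and "z = discount (\<sigma> 3)"
  have d: "1 / 2 < d" "d < 1"
    unfolding d_def by (fact discount_2_bounds)+
  have total: "x + y + z = 3 / 2 + d" and x: "x \<ge> 1 / 2"
    using assms d unfolding x_def y_def z_def d_def
    by (cases rule: rankings_3_cases; simp add: discount_simps)+
  have "NDCG 3 \<sigma> (rel3 1 1 0) + NDCG 3 \<sigma> (rel3 0 0 1) + NDCG 3 \<sigma> (rel3 1 0 1) + NDCG 3 \<sigma> (rel3 0 1 0)
      = ((x + y) + (x + z)) / (1 + d) + (y + z)"
    unfolding NDCG_rel3[OF assms] x_def y_def z_def d_def by (simp add: add_divide_distrib)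
  also have "\<dots> = (3 / 2 + d + x) / (1 + d) + 3 / 2 + d - x"
    using total by (simp add: algebra_simps)
  \<comment> \<open>only the discount of the object ranked first matters, and it is at least 1/2\<close>
  also have "\<dots> = (3 / 2 + d + 1 / 2) / (1 + d) + (x - 1 / 2) / (1 + d) + 3 / 2 + d - x"
    by (simp flip: add_divide_distrib)
  also have "\<dots> \<le> (3 / 2 + d + 1 / 2) / (1 + d) + 3 / 2 + d - 1 / 2"
  proof -
    have "x - 1 / 2 \<le> (x - 1 / 2) * (1 + d)"
      using d x by (simp add: algebra_simps)
    then have "(x - 1 / 2) / (1 + d) \<le> x - 1 / 2"
      using d by (simp add: divide_le_eq)
    then show ?thesis
      by simp
  qed
  finally show ?thesis
    by (simp add: d_def add_ac)
qed

lemma NDCG_regret_lower_bound: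
  assumes "valid_learner 3 L"
  shows "\<exists>rs. binary_seq 3 T rs \<and>
    regret_gain 3 (NDCG 3) L rs T \<ge> discount 2 * (1 - discount 2) / (1 + discount 2) / 4 * real T"
proof (rule regret_gain_two_pairs_lower_bound[OF assms, of "rel3 1 1 0" "rel3 0 0 1" "rel3 1 0 1" "rel3 0 1 0"
      _ "(2 + discount 2) / (1 + discount 2) + 1 + discount 2"
      "Transposition.transpose 1 3" "Transposition.transpose 1 2"])
  fix x :: nat
  assume "x \<in> {1..3}"
  then have "x = 1 \<or> x = 2 \<or> x = 3"
    by auto
  then show "{rel3 1 1 0 x, rel3 0 0 1 x, rel3 1 0 1 x, rel3 0 1 0 x} \<subseteq> {0, 1}"
    and "rel3 1 1 0 x + rel3 0 0 1 x = rel3 1 0 1 x + rel3 0 1 0 x"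
    by auto
next
  define d where "d = discount 2"
  have d: "1 / 2 < d" "d < 1"
    unfolding d_def by (fact discount_2_bounds)+
  have "NDCG 3 (Transposition.transpose 1 3) (rel3 1 1 0) = (1 / 2 + d) / (1 + d)"
    and "NDCG 3 (Transposition.transpose 1 3) (rel3 0 0 1) = 1"
    and "NDCG 3 (Transposition.transpose 1 2) (rel3 1 0 1) = (d + 1 / 2) / (1 + d)"
    and "NDCG 3 (Transposition.transpose 1 2) (rel3 0 1 0) = 1"
    by (simp_all add: NDCG_rel3 transpose_in_rankings discount_simps d_def)
  moreover have "1 + d \<noteq> 0"
    using d by simp
  ultimately have "NDCG 3 (Transposition.transpose 1 3) (rel3 1 1 0) + NDCG 3 (Transposition.transpose 1 3) (rel3 0 0 1)
      + NDCG 3 (Transposition.transpose 1 2) (rel3 1 0 1) + NDCG 3 (Transposition.transpose 1 2) (rel3 0 1 0)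
      - ((2 + d) / (1 + d) + 1 + d) = d * (1 - d) / (1 + d)"
    by (simp add: field_simps)
  then show "NDCG 3 (Transposition.transpose 1 3) (rel3 1 1 0) + NDCG 3 (Transposition.transpose 1 3) (rel3 0 0 1)
      + NDCG 3 (Transposition.transpose 1 2) (rel3 1 0 1) + NDCG 3 (Transposition.transpose 1 2) (rel3 0 1 0)
      - ((2 + discount 2) / (1 + discount 2) + 1 + discount 2)
      \<ge> discount 2 * (1 - discount 2) / (1 + discount 2)"
    by (simp add: d_def)
qed (auto simp: NDCG_rel3_sum_le transpose_in_rankings)

lemma real_card_filter: "finite A \<Longrightarrow> real (card {j \<in> A. P j}) = (\<Sum>j\<in>A. if P j then 1 else 0)"
  by (simp add: sum.If_cases Int_def)

lemma MAP_3:
  "MAP 3 \<sigma> r = (let b = \<lambda>k. if r (inv \<sigma> k) = 1 then 1 else 0 in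
     (b 1 + (b 1 + b 2) / 2 * b 2 + (b 1 + b 2 + b 3) / 3 * b 3) / norm1 3 r)"
proof -
  have sum_1_to_3: "(\<Sum>i\<in>{1..3}. F i) = F 1 + F 2 + F 3" for F :: "nat \<Rightarrow> real"
    unfolding atLeastAtMost_1_3 by simp
  have intervals: "{1..1::nat} = {1}" "{1..2::nat} = {1, 2}"
    by auto
  have counts: "real (card {j \<in> {1..1::nat}. P j}) = (if P 1 then 1 else 0)"
    "real (card {j \<in> {1..2::nat}. P j}) = (if P 1 then 1 else 0) + (if P 2 then 1 else 0)"
    "real (card {j \<in> {1..3::nat}. P j}) = (if P 1 then 1 else 0) + (if P 2 then 1 else 0) + (if P 3 then 1 else 0)"
    for P
    unfolding real_card_filter[OF finite_atLeastAtMost]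
    unfolding intervals atLeastAtMost_1_3 by simp_all
  show ?thesis
    unfolding MAP_def sum_1_to_3 counts by (simp add: Let_def field_simps)
qed

lemma norm1_3: "norm1 3 r = \<bar>r 1\<bar> + \<bar>r 2\<bar> + \<bar>r 3\<bar>"
  unfolding norm1_def atLeastAtMost_1_3 by simp

lemma MAP_rel3_sum_le:
  assumes "\<sigma> \<in> rankings 3"
  shows "MAP 3 \<sigma> (rel3 1 1 0) + MAP 3 \<sigma> (rel3 0 0 1) + MAP 3 \<sigma> (rel3 1 0 1) + MAP 3 \<sigma> (rel3 0 1 0) \<le> 35 / 12"
proof -
  have inv: "inv \<sigma> (\<sigma> 1) = 1" "inv \<sigma> (\<sigma> 2) = 2" "inv \<sigma> (\<sigma> 3) = 3"
    using inv_ranking_eqI[OF assms] by simp_all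
  from assms show ?thesis
    by (cases rule: rankings_3_cases) (use inv in \<open>simp_all add: MAP_3 norm1_3\<close>)
qed

lemma MAP_regret_lower_bound:
  assumes "valid_learner 3 L"
  shows "\<exists>rs. binary_seq 3 T rs \<and> regret_gain 3 (MAP 3) L rs T \<ge> 1 / 4 / 4 * real T"
proof (rule regret_gain_two_pairs_lower_bound[OF assms, of "rel3 1 1 0" "rel3 0 0 1" "rel3 1 0 1" "rel3 0 1 0"
      _ "35 / 12" "Transposition.transpose 1 3" "Transposition.transpose 1 2"])
  fix x :: nat
  assume "x \<in> {1..3}"
  then have "x = 1 \<or> x = 2 \<or> x = 3"
    by auto
  then show "{rel3 1 1 0 x, rel3 0 0 1 x, rel3 1 0 1 x, rel3 0 1 0 x} \<subseteq> {0, 1}"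
    and "rel3 1 1 0 x + rel3 0 0 1 x = rel3 1 0 1 x + rel3 0 1 0 x"
    by auto
next
  have "inv (Transposition.transpose a b) = Transposition.transpose a b" for a b :: nat
    by simp
  then show "MAP 3 (Transposition.transpose 1 3) (rel3 1 1 0) + MAP 3 (Transposition.transpose 1 3) (rel3 0 0 1)
      + MAP 3 (Transposition.transpose 1 2) (rel3 1 0 1) + MAP 3 (Transposition.transpose 1 2) (rel3 0 1 0)
      - 35 / 12 \<ge> 1 / 4"
    by (simp add: MAP_3 norm1_3)
qed (use MAP_rel3_sum_le in \<open>simp_all add: transpose_in_rankings\<close>)

definition rel4 :: "real \<Rightarrow> real \<Rightarrow> real \<Rightarrow> real \<Rightarrow> relevance" where
  "rel4 a b c d = (\<lambda>x. if x = 1 then a else if x = 2 then b else if x = 3 then c else if x = 4 then d else 0)"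

lemma rel4_simps [simp]: "rel4 a b c d 1 = a" "rel4 a b c d (Suc 0) = a" "rel4 a b c d 2 = b"
    "rel4 a b c d 3 = c" "rel4 a b c d 4 = d"
  by (simp_all add: rel4_def)

lemma atLeastAtMost_1_4: "{1..4::nat} = {1, 2, 3, 4}"
  by auto

lemma AUC_rel4:
  fixes \<sigma> :: ranking
  defines "p i j \<equiv> of_bool (\<sigma> i < \<sigma> j) :: real"
  shows "AUC 4 \<sigma> (rel4 0 0 0 1) = (p 1 4 + p 2 4 + p 3 4) / 3"
    and "AUC 4 \<sigma> (rel4 0 1 1 0) = (p 1 2 + p 1 3 + p 4 2 + p 4 3) / 4"
    and "AUC 4 \<sigma> (rel4 0 0 1 0) = (p 1 3 + p 2 3 + p 4 3) / 3"
    and "AUC 4 \<sigma> (rel4 0 1 0 1) = (p 1 2 + p 1 4 + p 3 2 + p 3 4) / 4"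
  unfolding AUC_def norm1_def atLeastAtMost_1_4 p_def by simp_all

lemma of_bool_less_swap:
  assumes "\<sigma> \<in> rankings m" and "i \<in> {1..m}" and "j \<in> {1..m}" and "i \<noteq> j"
  shows "of_bool (\<sigma> j < \<sigma> i) = (1 :: real) - of_bool (\<sigma> i < \<sigma> j)"
proof -
  have "\<sigma> i \<noteq> \<sigma> j"
    using assms(1,4) permutes_inj by (fastforce simp: rankings_def inj_eq)
  then show ?thesis
    by auto
qed

lemma AUC_rel4_sum_ge:
  assumes "\<sigma> \<in> rankings 4"
  shows "AUC 4 \<sigma> (rel4 0 0 0 1) + AUC 4 \<sigma> (rel4 0 1 1 0) + AUC 4 \<sigma> (rel4 0 0 1 0) + AUC 4 \<sigma> (rel4 0 1 0 1)
    \<ge> 13 / 12"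
proof -
  have swaps: "of_bool (\<sigma> 3 < \<sigma> 2) = (1 :: real) - of_bool (\<sigma> 2 < \<sigma> 3)"
    "of_bool (\<sigma> 4 < \<sigma> 2) = (1 :: real) - of_bool (\<sigma> 2 < \<sigma> 4)"
    "of_bool (\<sigma> 4 < \<sigma> 3) = (1 :: real) - of_bool (\<sigma> 3 < \<sigma> 4)"
    by (rule of_bool_less_swap[OF assms]; simp)+
  show ?thesis
    unfolding AUC_rel4 swaps by (simp add: field_simps)
qed

lemma AUC_regret_lower_bound:
  assumes "valid_learner 4 L"
  shows "\<exists>rs. binary_seq 4 T rs \<and> regret_loss 4 (AUC 4) L rs T \<ge> 1 / 12 / 4 * real T"
  unfolding regret_loss_eq_regret_gain_uminus
proof (rule regret_gain_two_pairs_lower_bound[OF assms, of "rel4 0 0 0 1" "rel4 0 1 1 0" "rel4 0 0 1 0" "rel4 0 1 0 1"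
      _ "- 13 / 12" "Transposition.transpose 1 4" "Transposition.transpose 1 3 \<circ> Transposition.transpose 1 4"])
  fix x :: nat
  assume "x \<in> {1..4}"
  then have "x = 1 \<or> x = 2 \<or> x = 3 \<or> x = 4"
    by auto
  then show "{rel4 0 0 0 1 x, rel4 0 1 1 0 x, rel4 0 0 1 0 x, rel4 0 1 0 1 x} \<subseteq> {0, 1}"
    and "rel4 0 0 0 1 x + rel4 0 1 1 0 x = rel4 0 0 1 0 x + rel4 0 1 0 1 x"
    by auto
next
  fix \<sigma>
  assume "\<sigma> \<in> rankings 4"
  then show "- AUC 4 \<sigma> (rel4 0 0 0 1) + - AUC 4 \<sigma> (rel4 0 1 1 0) + - AUC 4 \<sigma> (rel4 0 0 1 0)
      + - AUC 4 \<sigma> (rel4 0 1 0 1) \<le> - 13 / 12"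
    using AUC_rel4_sum_ge by fastforce
next
  show "Transposition.transpose 1 3 \<circ> Transposition.transpose 1 4 \<in> rankings 4"
    by (simp add: rankings_def permutes_compose permutes_swap_id)
next
  show "- AUC 4 (Transposition.transpose 1 4) (rel4 0 0 0 1) + - AUC 4 (Transposition.transpose 1 4) (rel4 0 1 1 0)
      + - AUC 4 (Transposition.transpose 1 3 \<circ> Transposition.transpose 1 4) (rel4 0 0 1 0)
      + - AUC 4 (Transposition.transpose 1 3 \<circ> Transposition.transpose 1 4) (rel4 0 1 0 1) - - 13 / 12
      \<ge> 1 / 12"
    by (simp add: AUC_rel4 Transposition.transpose_def)
qed (simp_all add: transpose_in_rankings)

theorem theorem6:
  shows "(\<exists>m::nat. \<exists>c>0. \<exists>T0. \<forall>T\<ge>T0. \<forall>L. valid_learner m L \<longrightarrow>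
            (\<exists>rs. binary_seq m T rs \<and> regret_gain m (NDCG m) L rs T \<ge> c * real T))
       \<and> (\<exists>m::nat. \<exists>c>0. \<exists>T0. \<forall>T\<ge>T0. \<forall>L. valid_learner m L \<longrightarrow>
            (\<exists>rs. binary_seq m T rs \<and> regret_gain m (MAP m) L rs T \<ge> c * real T))
       \<and> (\<exists>m::nat. \<exists>c>0. \<exists>T0. \<forall>T\<ge>T0. \<forall>L. valid_learner m L \<longrightarrow>
            (\<exists>rs. binary_seq m T rs \<and> regret_loss m (AUC m) L rs T \<ge> c * real T))"
proof (intro conjI)
  have "discount 2 * (1 - discount 2) / (1 + discount 2) / 4 > 0"
    using discount_2_bounds by simp
  then show "\<exists>m::nat. \<exists>c>0. \<exists>T0. \<forall>T\<ge>T0. \<forall>L. valid_learner m L \<longrightarrow>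
            (\<exists>rs. binary_seq m T rs \<and> regret_gain m (NDCG m) L rs T \<ge> c * real T)"
    using NDCG_regret_lower_bound by blast
  show "\<exists>m::nat. \<exists>c>0. \<exists>T0. \<forall>T\<ge>T0. \<forall>L. valid_learner m L \<longrightarrow>
            (\<exists>rs. binary_seq m T rs \<and> regret_gain m (MAP m) L rs T \<ge> c * real T)"
    using MAP_regret_lower_bound by (intro exI[of _ 3] exI[of _ "1 / 4 / 4"]) auto
  show "\<exists>m::nat. \<exists>c>0. \<exists>T0. \<forall>T\<ge>T0. \<forall>L. valid_learner m L \<longrightarrow>
            (\<exists>rs. binary_seq m T rs \<and> regret_loss m (AUC m) L rs T \<ge> c * real T)"
    using AUC_regret_lower_bound by (intro exI[of _ 4] exI[of _ "1 / 12 / 4"]) auto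
qed

end
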